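(* For any $n\times n$ completely positive semidefinite matrix $X$ and any $m\times m$ completely positive semidefinite matrix $Y$, the block-diagonal matrix $X\oplus Y=\begin{pmatrix}X&0\\0&Y\end{pmatrix}$ is completely positive semidefinite and $$\mathrm{cpsd}\text{-}\mathrm{rank}(X\oplus Y)=\mathrm{cpsd}\text{-}\mathrm{rank}(X)+\mathrm{cpsd}\text{-}\mathrm{rank}(Y).$$
   Context: An $n\times n$ matrix $X$ is completely positive semidefinite (cpsd) if there exist $d\ge1$ and Hermitian positive semidefinite $d\times d$ matrices $P_1,\dots,P_n$ with $X_{ij}=\mathrm{Tr}(P_iP_j)$ for all $i,j$; the cpsd-rank of $X$ is the least such $d$. *)

theory Defs
  imports "Jordan_Normal_Form.Matrix"
begin

definition hermitian_mat :: "complex mat \<Rightarrow> bool" where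
  "hermitian_mat P \<longleftrightarrow> dim_row P = dim_col P \<and>
     (\<forall>i < dim_row P. \<forall>j < dim_row P. P $$ (i, j) = cnj (P $$ (j, i)))"

definition psd_mat :: "complex mat \<Rightarrow> bool" where
  "psd_mat P \<longleftrightarrow> hermitian_mat P \<and>
     (\<forall>v \<in> carrier_vec (dim_row P).
        0 \<le> Re (\<Sum>i < dim_row P. \<Sum>j < dim_row P. cnj (v $ i) * P $$ (i, j) * v $ j))"

definition mat_trace :: "'a :: comm_ring_1 mat \<Rightarrow> 'a" where
  "mat_trace A = (\<Sum>i < dim_row A. A $$ (i, i))"

definition cpsd_factorizable :: "nat \<Rightarrow> real mat \<Rightarrow> bool" where
  "cpsd_factorizable d X \<longleftrightarrow>
     (\<exists>P :: nat \<Rightarrow> complex mat.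
        (\<forall>i < dim_row X. P i \<in> carrier_mat d d \<and> psd_mat (P i)) \<and>
        (\<forall>i < dim_row X. \<forall>j < dim_row X.
            complex_of_real (X $$ (i, j)) = mat_trace (P i * P j)))"

definition cpsd :: "real mat \<Rightarrow> bool" where
  "cpsd X \<longleftrightarrow> dim_row X = dim_col X \<and> (\<exists>d \<ge> 1. cpsd_factorizable d X)"

definition cpsd_rank :: "real mat \<Rightarrow> nat" where
  "cpsd_rank X = (LEAST d. d \<ge> 1 \<and> cpsd_factorizable d X)"

end

theory Submission
  imports Defs "Jordan_Normal_Form.Spectral_Radius" "Jordan_Normal_Form.Schur_Decomposition"
begin

text \<open>
  Gluing a factorization of \<open>X\<close> by \<open>a \<times> a\<close> matrices and one of \<open>Y\<close> by \<open>b \<times> b\<close> matrices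
  along complementary coordinate blocks of \<open>\<complex>\<^sup>a\<^sup>+\<^sup>b\<close> factorizes \<open>X \<oplus> Y\<close>, so the rank is
  subadditive. Conversely, let \<open>R\<^sub>1, \<dots>, R\<^sub>n\<^sub>+\<^sub>m\<close> be \<open>d \<times> d\<close> psd matrices factorizing
  \<open>X \<oplus> Y\<close>. The zero off-diagonal blocks say \<open>Tr (R\<^sub>i R\<^sub>n\<^sub>+\<^sub>j) = 0\<close>, hence
  \<open>Tr (S R\<^sub>n\<^sub>+\<^sub>j) = 0\<close> for \<open>S = R\<^sub>1 + \<dots> + R\<^sub>n\<close>. In a unitary basis diagonalizing \<open>S\<close>, the
  diagonals of all \<open>R\<^sub>i\<close> (\<open>i \<le> n\<close>) vanish outside the set \<open>K\<close> of coordinates where \<open>S\<close> has a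
  nonzero diagonal entry, and those of all \<open>R\<^sub>n\<^sub>+\<^sub>j\<close> vanish on \<open>K\<close>. A psd matrix with a zero
  diagonal entry vanishes on that row and column, so the two families live on \<open>K\<close> and on its
  complement, and restricting to these coordinates factorizes \<open>X\<close> and \<open>Y\<close> with sizes adding
  up to \<open>d\<close>. Both sizes are positive because \<open>X\<close> and \<open>Y\<close> are nonzero.
\<close>

section \<open>Adjoints, Hermitian and positive semidefinite matrices\<close>

lemma mat_adjoint_dim [simp]:
  "dim_row (mat_adjoint A) = dim_col A" "dim_col (mat_adjoint A) = dim_row A"
  by (simp_all add: mat_adjoint_def)

lemma mat_adjoint_carrier [simp]: "A \<in> carrier_mat r c \<Longrightarrow> mat_adjoint A \<in> carrier_mat c r"
  by auto

lemma index_mat_adjoint [simp]: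
  "i < dim_col A \<Longrightarrow> j < dim_row A \<Longrightarrow> mat_adjoint (A :: complex mat) $$ (i, j) = cnj (A $$ (j, i))"
  by (simp add: mat_adjoint_def mat_of_rows_index)

lemma row_mat_adjoint:
  "i < dim_col A \<Longrightarrow> row (mat_adjoint (A :: complex mat)) i = conjugate (col A i)"
  by (simp add: mat_adjoint_def)

lemma mat_adjoint_adjoint [simp]: "mat_adjoint (mat_adjoint (A :: complex mat)) = A"
  by (rule eq_matI) auto

lemma mat_adjoint_one [simp]: "mat_adjoint (1\<^sub>m n :: complex mat) = 1\<^sub>m n"
  by (rule eq_matI) auto

lemma mat_adjoint_mult:
  fixes A B :: "complex mat"
  assumes "A \<in> carrier_mat r k" "B \<in> carrier_mat k c"
  shows "mat_adjoint (A * B) = mat_adjoint B * mat_adjoint A"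
  using assms by (intro eq_matI) (auto simp: scalar_prod_def cnj_sum mult.commute)

lemma mat_adjoint_mult_congruence:
  fixes W V H :: "complex mat"
  assumes W: "W \<in> carrier_mat n m" and V: "V \<in> carrier_mat m k" and H: "H \<in> carrier_mat n n"
  shows "mat_adjoint (W * V) * H * (W * V) = mat_adjoint V * (mat_adjoint W * H * W) * V"
proof -
  have W': "mat_adjoint W \<in> carrier_mat m n" and V': "mat_adjoint V \<in> carrier_mat k m"
    using W V by simp_all
  have WH: "mat_adjoint W * H \<in> carrier_mat m n"
    using W' H by simp
  have "mat_adjoint (W * V) * H * (W * V) = mat_adjoint V * (mat_adjoint W * H) * (W * V)"
    unfolding mat_adjoint_mult[OF W V] using assoc_mult_mat[OF V' W' H] by simp
  also have "\<dots> = mat_adjoint V * (mat_adjoint W * H * (W * V))"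
    by (rule assoc_mult_mat[OF V' WH mult_carrier_mat[OF W V]])
  also have "mat_adjoint W * H * (W * V) = mat_adjoint W * H * W * V"
    by (rule assoc_mult_mat[OF WH W V, symmetric])
  also have "mat_adjoint V * \<dots> = mat_adjoint V * (mat_adjoint W * H * W) * V"
    by (rule assoc_mult_mat[OF V' mult_carrier_mat[OF WH W] V, symmetric])
  finally show ?thesis .
qed

lemma mat_adjoint_block_diag:
  fixes A D :: "complex mat"
  assumes "A \<in> carrier_mat m m" "D \<in> carrier_mat k k"
  shows "mat_adjoint (four_block_mat A (0\<^sub>m m k) (0\<^sub>m k m) D) =
    four_block_mat (mat_adjoint A) (0\<^sub>m m k) (0\<^sub>m k m) (mat_adjoint D)"
  using assms by (intro eq_matI) auto

lemma conjugate_unit_vec [simp]: "conjugate (unit_vec n i) = (unit_vec n i :: complex vec)"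
  by (intro eq_vecI) (auto simp: unit_vec_def)

lemma hermitian_mat_iff_adjoint:
  assumes "A \<in> carrier_mat n n"
  shows "hermitian_mat A \<longleftrightarrow> mat_adjoint A = A"
proof
  assume H: "hermitian_mat A"
  show "mat_adjoint A = A"
  proof (rule eq_matI)
    fix i j
    assume "i < dim_row A" "j < dim_col A"
    with H assms show "mat_adjoint A $$ (i, j) = A $$ (i, j)"
      unfolding hermitian_mat_def by (metis carrier_matD index_mat_adjoint)
  qed (use assms in auto)
next
  assume "mat_adjoint A = A"
  then show "hermitian_mat A"
    using assms unfolding hermitian_mat_def by (metis index_mat_adjoint carrier_matD)
qed

lemma hermitian_matD:
  "hermitian_mat A \<Longrightarrow> A \<in> carrier_mat n n \<Longrightarrow> i < n \<Longrightarrow> j < n \<Longrightarrow>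
    A $$ (i, j) = cnj (A $$ (j, i))"
  unfolding hermitian_mat_def by blast

lemma hermitian_mat_congruence:
  assumes H: "H \<in> carrier_mat d d" "hermitian_mat H" and U: "U \<in> carrier_mat d k"
  shows "hermitian_mat (mat_adjoint U * H * U)"
proof -
  have U': "mat_adjoint U \<in> carrier_mat k d"
    using U by simp
  have H': "mat_adjoint H = H"
    using H hermitian_mat_iff_adjoint by blast
  have "mat_adjoint (mat_adjoint U * H * U) = mat_adjoint U * (mat_adjoint H * U)"
    by (simp add: mat_adjoint_mult[OF mult_carrier_mat[OF U' H(1)] U] mat_adjoint_mult[OF U' H(1)])
  also have "\<dots> = mat_adjoint U * H * U"
    unfolding H' by (rule assoc_mult_mat[OF U' H(1) U, symmetric])
  finally show ?thesis
    using mult_carrier_mat[OF mult_carrier_mat[OF U' H(1)] U] hermitian_mat_iff_adjoint by blast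
qed

lemma index_congruence:
  assumes U: "U \<in> carrier_mat d k" and M: "M \<in> carrier_mat d d" and ab: "a < k" "b < k"
  shows "(mat_adjoint U * M * U) $$ (a, b) =
    (\<Sum>l<d. \<Sum>p<d. cnj (U $$ (p, a)) * M $$ (p, l) * U $$ (l, b))"
  using assms by (simp add: scalar_prod_def atLeast0LessThan sum_distrib_right)

lemma quadratic_form_sum:
  assumes "P \<in> carrier_mat d d" "v \<in> carrier_vec d"
  shows "conjugate v \<bullet> (P *\<^sub>v v) = (\<Sum>i<d. \<Sum>j<d. cnj (v $ i) * P $$ (i, j) * v $ j)"
  using assms by (simp add: scalar_prod_def sum_distrib_left mult.assoc atLeast0LessThan)

lemma psd_mat_iff:
  assumes "P \<in> carrier_mat d d"
  shows "psd_mat P \<longleftrightarrow>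
    hermitian_mat P \<and> (\<forall>v \<in> carrier_vec d. 0 \<le> Re (conjugate v \<bullet> (P *\<^sub>v v)))"
  using assms by (simp add: psd_mat_def quadratic_form_sum)

lemma psd_mat_hermitian: "psd_mat P \<Longrightarrow> hermitian_mat P"
  by (simp add: psd_mat_def)

lemma conjugate_mult_mat_vec_scalar_prod:
  fixes U :: "complex mat"
  assumes "U \<in> carrier_mat d k" "v \<in> carrier_vec k" "w \<in> carrier_vec d"
  shows "conjugate (U *\<^sub>v v) \<bullet> w = conjugate v \<bullet> (mat_adjoint U *\<^sub>v w)"
proof -
  have "conjugate (U *\<^sub>v v) \<bullet> w = (\<Sum>p<d. \<Sum>i<k. cnj (U $$ (p, i)) * cnj (v $ i) * w $ p)"
    using assms by (simp add: scalar_prod_def atLeast0LessThan cnj_sum sum_distrib_right)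
  also have "\<dots> = (\<Sum>i<k. \<Sum>p<d. cnj (U $$ (p, i)) * cnj (v $ i) * w $ p)"
    by (rule sum.swap)
  also have "\<dots> = conjugate v \<bullet> (mat_adjoint U *\<^sub>v w)"
    using assms by (simp add: scalar_prod_def atLeast0LessThan sum_distrib_left mult_ac)
  finally show ?thesis .
qed

lemma psd_mat_congruence:
  assumes M: "M \<in> carrier_mat d d" "psd_mat M" and U: "U \<in> carrier_mat d k"
  shows "psd_mat (mat_adjoint U * M * U)"
proof -
  have U': "mat_adjoint U \<in> carrier_mat k d"
    using U by simp
  have C: "mat_adjoint U * M * U \<in> carrier_mat k k"
    using M U U' by auto
  have herm: "hermitian_mat (mat_adjoint U * M * U)"
    using hermitian_mat_congruence[OF M(1) psd_mat_hermitian[OF M(2)] U] .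
  have nonneg: "0 \<le> Re (conjugate v \<bullet> ((mat_adjoint U * M * U) *\<^sub>v v))"
    if v: "v \<in> carrier_vec k" for v
  proof -
    have Uv: "U *\<^sub>v v \<in> carrier_vec d"
      using U v by simp
    have "(mat_adjoint U * M * U) *\<^sub>v v = mat_adjoint U *\<^sub>v (M *\<^sub>v (U *\<^sub>v v))"
      by (simp add: assoc_mult_mat_vec[OF mult_carrier_mat[OF U' M(1)] U v]
          assoc_mult_mat_vec[OF U' M(1) Uv])
    then have "conjugate v \<bullet> ((mat_adjoint U * M * U) *\<^sub>v v) =
        conjugate (U *\<^sub>v v) \<bullet> (M *\<^sub>v (U *\<^sub>v v))"
      using conjugate_mult_mat_vec_scalar_prod[OF U v mult_mat_vec_carrier[OF M(1) Uv]] by simp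
    moreover have "0 \<le> Re (conjugate (U *\<^sub>v v) \<bullet> (M *\<^sub>v (U *\<^sub>v v)))"
      using M Uv unfolding psd_mat_iff[OF M(1)] by blast
    ultimately show ?thesis
      by simp
  qed
  show ?thesis
    unfolding psd_mat_iff[OF C] using herm nonneg by blast
qed

lemma psd_mat_conj:
  assumes "E \<in> carrier_mat d k" "M \<in> carrier_mat k k" "psd_mat M"
  shows "E * M * mat_adjoint E \<in> carrier_mat d d \<and> psd_mat (E * M * mat_adjoint E)"
  using psd_mat_congruence[OF assms(2,3) mat_adjoint_carrier[OF assms(1)]]
    mult_carrier_mat[OF mult_carrier_mat[OF assms(1,2)] mat_adjoint_carrier[OF assms(1)]] by simp

text \<open>Here \<open>\<le>\<close> on \<^typ>\<open>complex\<close> is the order of \<^theory>\<open>HOL-Library.Complex_Order\<close>: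
  \<open>0 \<le> z\<close> means that \<open>z\<close> is a nonnegative real.\<close>

lemma psd_mat_diag_nonneg:
  assumes P: "P \<in> carrier_mat d d" "psd_mat P" and k: "k < d"
  shows "0 \<le> P $$ (k, k)"
proof -
  have "P $$ (k, k) = cnj (P $$ (k, k))"
    using hermitian_matD[OF psd_mat_hermitian[OF P(2)] P(1) k k] .
  then have "Im (P $$ (k, k)) = 0"
    by (metis cnj.sel(2) neg_equal_zero)
  have "P *\<^sub>v unit_vec d k = col P k"
    using P k by (intro eq_vecI) (auto simp: scalar_prod_right_unit)
  then have "conjugate (unit_vec d k) \<bullet> (P *\<^sub>v unit_vec d k) = P $$ (k, k)"
    using P k by (simp add: scalar_prod_left_unit)
  then have "0 \<le> Re (P $$ (k, k))"
    using P k unfolding psd_mat_iff[OF P(1)] by (metis unit_vec_carrier)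
  with \<open>Im (P $$ (k, k)) = 0\<close> show ?thesis
    by (simp add: less_eq_complex_def)
qed

lemma psd_mat_zero_diag_row:
  assumes P: "P \<in> carrier_mat d d" "psd_mat P" and kl: "k < d" "l < d"
    and z: "P $$ (k, k) = 0"
  shows "P $$ (k, l) = 0"
proof (rule ccontr)
  define a where "a = P $$ (k, l)"
  assume "P $$ (k, l) \<noteq> 0"
  then have a: "cmod a > 0" and "k \<noteq> l"
    using z by (auto simp: a_def)
  have lk: "P $$ (l, k) = cnj a"
    using hermitian_matD[OF psd_mat_hermitian[OF P(2)] P(1) kl(2,1)] by (simp add: a_def)
  \<comment> \<open>test vector \<open>x e\<^sub>k + e\<^sub>l\<close> with \<open>x = -t a\<close>, where \<open>t\<close> is large enough\<close>
  define r where "r = Re (P $$ (l, l))"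
  define t where "t = (\<bar>r\<bar> + 1) / (2 * (cmod a)\<^sup>2)"
  define x where "x = - (of_real t * a)"
  define v where "v = vec d (\<lambda>i. if i = k then x else if i = l then 1 else 0)"
  have v: "v \<in> carrier_vec d"
    by (simp add: v_def)
  have two_terms: "(\<Sum>i<d. f i) = f k + f l" if "\<And>i. i \<noteq> k \<Longrightarrow> i \<noteq> l \<Longrightarrow> f i = 0"
    for f :: "nat \<Rightarrow> complex"
  proof -
    have "(\<Sum>i<d. f i) = (\<Sum>i\<in>{k, l}. f i)"
      by (rule sum.mono_neutral_right) (use kl that in auto)
    then show ?thesis
      using \<open>k \<noteq> l\<close> by simp
  qed
  have "conjugate v \<bullet> (P *\<^sub>v v) = cnj x * a + cnj a * x + P $$ (l, l)"
    using P(1) v \<open>k \<noteq> l\<close> kl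
    by (simp add: quadratic_form_sum two_terms v_def z lk a_def[symmetric])
  also have "cnj x * a + cnj a * x = - of_real (2 * t * (cmod a)\<^sup>2)"
    by (simp add: x_def algebra_simps complex_norm_square[symmetric])
  finally have "Re (conjugate v \<bullet> (P *\<^sub>v v)) = r - 2 * t * (cmod a)\<^sup>2"
    by (simp add: r_def)
  also have "\<dots> = r - (\<bar>r\<bar> + 1)"
    using a by (simp add: t_def field_simps)
  finally have "Re (conjugate v \<bullet> (P *\<^sub>v v)) < 0"
    by simp
  then show False
    using P v unfolding psd_mat_iff[OF P(1)] by force
qed

lemma psd_mat_zero_diag:
  assumes P: "P \<in> carrier_mat d d" "psd_mat P" and kl: "k < d" "l < d"
    and z: "P $$ (k, k) = 0"
  shows "P $$ (k, l) = 0" and "P $$ (l, k) = 0"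
proof -
  show "P $$ (k, l) = 0"
    using psd_mat_zero_diag_row[OF assms] .
  then show "P $$ (l, k) = 0"
    using hermitian_matD[OF psd_mat_hermitian[OF P(2)] P(1) kl(2,1)] by simp
qed

lemma mat_trace_mult:
  assumes "A \<in> carrier_mat d k" "B \<in> carrier_mat k d"
  shows "mat_trace (A * B) = (\<Sum>i<d. \<Sum>j<k. A $$ (i, j) * B $$ (j, i))"
  using assms by (simp add: mat_trace_def scalar_prod_def atLeast0LessThan)

lemma mat_trace_mult_comm:
  assumes "A \<in> carrier_mat d k" "B \<in> carrier_mat k d"
  shows "mat_trace (A * B) = mat_trace (B * A)"
  using assms by (simp add: mat_trace_mult sum.swap[of _ "{..<k}"] mult.commute)

lemma mat_trace_diagonal_mult:
  assumes D: "D \<in> carrier_mat d d" "diagonal_mat D" and B: "B \<in> carrier_mat d d"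
  shows "mat_trace (D * B) = (\<Sum>i<d. D $$ (i, i) * B $$ (i, i))"
proof -
  have "(\<Sum>j<d. D $$ (i, j) * B $$ (j, i)) = D $$ (i, i) * B $$ (i, i)" if "i < d" for i
  proof -
    have "(\<Sum>j<d. D $$ (i, j) * B $$ (j, i)) = (\<Sum>j<d. if j = i then D $$ (i, i) * B $$ (i, i) else 0)"
      using D that by (intro sum.cong) (auto simp: diagonal_mat_def)
    then show ?thesis
      using that by simp
  qed
  then show ?thesis
    using D B by (simp add: mat_trace_mult)
qed

lemma psd_mat_diag_zero_trace_orthogonal:
  assumes D: "D \<in> carrier_mat d d" "diagonal_mat D" "\<And>k. k < d \<Longrightarrow> 0 \<le> D $$ (k, k)"
    and B: "B \<in> carrier_mat d d" "psd_mat B" and tr: "mat_trace (D * B) = 0"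
    and k: "k < d" "D $$ (k, k) \<noteq> 0"
  shows "B $$ (k, k) = 0"
proof -
  have "(\<Sum>k<d. D $$ (k, k) * B $$ (k, k)) = 0"
    using mat_trace_diagonal_mult[OF D(1,2) B(1)] tr by simp
  moreover have "0 \<le> D $$ (k, k) * B $$ (k, k)" if "k < d" for k
    using D(3)[OF that] psd_mat_diag_nonneg[OF B that] by (rule mult_nonneg_nonneg)
  ultimately have "D $$ (k, k) * B $$ (k, k) = 0"
    using k(1) sum_nonneg_eq_0_iff[of "{..<d}" "\<lambda>k. D $$ (k, k) * B $$ (k, k)"] by auto
  then show ?thesis
    using k(2) by simp
qed

lemma mat_trace_isometry_conj:
  assumes E: "E \<in> carrier_mat d a" and iso: "mat_adjoint E * E = 1\<^sub>m a"
    and P: "P \<in> carrier_mat a a" and Q: "Q \<in> carrier_mat a a"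
  shows "mat_trace ((E * P * mat_adjoint E) * (E * Q * mat_adjoint E)) = mat_trace (P * Q)"
proof -
  have E': "mat_adjoint E \<in> carrier_mat a d"
    using E by simp
  have QE: "Q * mat_adjoint E \<in> carrier_mat a d"
    using Q E' by simp
  have "(E * P * mat_adjoint E) * (E * Q * mat_adjoint E) =
      E * P * (mat_adjoint E * (E * (Q * mat_adjoint E)))"
    using E E' P QE by (simp add: assoc_mult_mat[OF E Q E'] assoc_mult_mat[of _ d a _ d _ d])
  also have "mat_adjoint E * (E * (Q * mat_adjoint E)) = Q * mat_adjoint E"
    using assoc_mult_mat[OF E' E QE] iso left_mult_one_mat[OF QE] by simp
  also have "E * P * (Q * mat_adjoint E) = E * (P * (Q * mat_adjoint E))"
    using E P QE by (rule assoc_mult_mat)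
  finally have "mat_trace ((E * P * mat_adjoint E) * (E * Q * mat_adjoint E)) =
      mat_trace (P * (Q * mat_adjoint E) * E)"
    using E P QE by (simp add: mat_trace_mult_comm[OF E])
  also have "P * (Q * mat_adjoint E) * E = P * Q"
    using P Q E E' iso by (simp add: assoc_mult_mat[of _ a a _ d _ a] assoc_mult_mat[OF Q E' E])
  finally show ?thesis .
qed

lemma congruence_orthogonal_mult:
  fixes E F P Q :: "complex mat"
  assumes E: "E \<in> carrier_mat d a" and F: "F \<in> carrier_mat d b" and orth: "mat_adjoint E * F = 0\<^sub>m a b"
    and P: "P \<in> carrier_mat a a" and Q: "Q \<in> carrier_mat b b"
  shows "(E * P * mat_adjoint E) * (F * Q * mat_adjoint F) = 0\<^sub>m d d"
proof -
  have E': "mat_adjoint E \<in> carrier_mat a d" and F': "mat_adjoint F \<in> carrier_mat b d"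
    using E F by simp_all
  have FQF: "F * Q * mat_adjoint F \<in> carrier_mat d d"
    using mult_carrier_mat[OF mult_carrier_mat[OF F Q] F'] .
  have "(E * P * mat_adjoint E) * (F * Q * mat_adjoint F) = E * P * (mat_adjoint E * (F * Q * mat_adjoint F))"
    by (rule assoc_mult_mat[OF mult_carrier_mat[OF E P] E' FQF])
  also have "mat_adjoint E * (F * Q * mat_adjoint F) = mat_adjoint E * F * Q * mat_adjoint F"
    using E' F Q F' by (simp add: assoc_mult_mat[of _ a d _ b _ b] assoc_mult_mat[of _ a d _ b _ d]
        assoc_mult_mat[of _ a b _ b _ d])
  also have "\<dots> = 0\<^sub>m a d"
    using Q F' by (simp add: orth left_mult_zero_mat[OF F'])
  finally show ?thesis
    using E P by simp
qed

section \<open>Unitary diagonalization of Hermitian matrices\<close>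

lemma mult_block_diag:
  assumes "A \<in> carrier_mat m m" "A' \<in> carrier_mat m m" "D \<in> carrier_mat k k" "D' \<in> carrier_mat k k"
  shows "four_block_mat A (0\<^sub>m m k) (0\<^sub>m k m) D * four_block_mat A' (0\<^sub>m m k) (0\<^sub>m k m) D' =
    four_block_mat (A * A') (0\<^sub>m m k) (0\<^sub>m k m) (D * D')"
  using assms by (simp add: mult_four_block_mat[OF assms(1) zero_carrier_mat zero_carrier_mat assms(3)
        assms(2) zero_carrier_mat zero_carrier_mat assms(4)])

definition vec_normalize :: "complex vec \<Rightarrow> complex vec" where
  "vec_normalize w = complex_of_real (1 / sqrt (Re (w \<bullet>c w))) \<cdot>\<^sub>v w"

lemma corthogonal_basis_with_first:
  fixes v :: "complex vec"
  assumes v: "v \<in> carrier_vec n" "v \<noteq> 0\<^sub>v n"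
  obtains ws where "corthogonal ws" "set ws \<subseteq> carrier_vec n" "length ws = n" "ws ! 0 = v"
proof -
  interpret cof_vec_space n "TYPE(complex)" .
  define b where "b = basis_completion v"
  from basis_completion[OF v, folded b_def] have b: "distinct b" "\<not> lin_dep (set b)"
    "set b \<subseteq> carrier_vec n" "hd b = v" "length b = n"
    by auto
  have "0 < n"
    using v by (cases n) auto
  with b obtain vs where "b = v # vs"
    by (cases b) auto
  then have gs: "corthogonal (gram_schmidt n b)" "set (gram_schmidt n b) \<subseteq> carrier_vec n"
    "length (gram_schmidt n b) = n" "hd (gram_schmidt n b) = v"
    using gram_schmidt_result[OF b(3,1,2)] gram_schmidt_hd[OF v(1), of vs] b(5) by auto
  then have "gram_schmidt n b \<noteq> []"
    using \<open>0 < n\<close> by auto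
  then show ?thesis
    using that[OF gs(1-3)] gs(4) by (simp add: hd_conv_nth)
qed

lemma mat_of_cols_normalize_isometry:
  assumes ws: "corthogonal ws" "set ws \<subseteq> carrier_vec n"
  shows "mat_adjoint (mat_of_cols n (map vec_normalize ws)) * mat_of_cols n (map vec_normalize ws) =
    1\<^sub>m (length ws)"
    (is "mat_adjoint ?W * ?W = _")
proof (rule eq_matI)
  fix i j
  assume "i < dim_row (1\<^sub>m (length ws) :: complex mat)" "j < dim_col (1\<^sub>m (length ws) :: complex mat)"
  then have ij: "i < length ws" "j < length ws"
    by simp_all
  then have wi: "ws ! i \<in> carrier_vec n" and wj: "ws ! j \<in> carrier_vec n"
    using ws(2) by auto
  have col: "col ?W l = vec_normalize (ws ! l)" if "l < length ws" for l
    using ws(2) that by (subst col_mat_of_cols) (auto simp: vec_normalize_def)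
  define c where "c w = complex_of_real (1 / sqrt (Re (w \<bullet>c w)))" for w :: "complex vec"
  have "(mat_adjoint ?W * ?W) $$ (i, j) = conjugate (col ?W i) \<bullet> col ?W j"
    using ij by (simp add: row_mat_adjoint)
  also have "\<dots> = cnj (c (ws ! i)) * c (ws ! j) * (ws ! j \<bullet>c ws ! i)"
    using wi wj ij
    by (simp add: col vec_normalize_def c_def conjugate_smult_vec conjugate_vec_sprod_comm[OF wj wi])
  also have "\<dots> = 1\<^sub>m (length ws) $$ (i, j)"
  proof (cases "i = j")
    case True
    have "ws ! j \<bullet>c ws ! j \<noteq> 0"
      using corthogonalD[OF ws(1), of j j] ij by simp
    then have "ws ! j \<bullet>c ws ! j > 0"
      using conjugate_square_ge_0_vec[of "ws ! j"] by (simp add: order_less_le)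
    then obtain r where r: "ws ! j \<bullet>c ws ! j = of_real r" "r > 0"
      by (metis complex_is_Real_iff less_complex_def of_real_Re zero_complex.sel(1,2))
    then show ?thesis
      using True ij by (simp add: c_def r(1) field_simps flip: of_real_mult)
  next
    case False
    then show ?thesis
      using corthogonalD[OF ws(1), of j i] ij by simp
  qed
  finally show "(mat_adjoint ?W * ?W) $$ (i, j) = 1\<^sub>m (length ws) $$ (i, j)" .
qed simp_all

lemma unitary_mat_with_first_column:
  fixes v :: "complex vec"
  assumes v: "v \<in> carrier_vec n" "v \<noteq> 0\<^sub>v n"
  obtains W c where "W \<in> carrier_mat n n" "mat_adjoint W * W = 1\<^sub>m n" "col W 0 = c \<cdot>\<^sub>v v"
proof -
  obtain ws where ws: "corthogonal ws" "set ws \<subseteq> carrier_vec n" "length ws = n" "ws ! 0 = v"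
    using corthogonal_basis_with_first[OF v] .
  define W where "W = mat_of_cols n (map vec_normalize ws)"
  have "0 < n"
    using v by (cases n) auto
  then have "ws ! 0 \<in> carrier_vec n"
    using ws(2,3) by auto
  then have "col W 0 = vec_normalize v"
    using ws \<open>0 < n\<close> by (simp add: W_def col_mat_of_cols vec_normalize_def)
  moreover have "W \<in> carrier_mat n n"
    using mat_of_cols_carrier[of n "map vec_normalize ws"] ws(3) by (simp add: W_def)
  ultimately show ?thesis
    using mat_of_cols_normalize_isometry[OF ws(1,2)] ws(3)
    by (intro that[of W "complex_of_real (1 / sqrt (Re (v \<bullet>c v)))"]) (simp_all add: W_def vec_normalize_def)
qed

lemma col_congruence_eigenvector:
  assumes W: "W \<in> carrier_mat n n" "mat_adjoint W * W = 1\<^sub>m n" and H: "H \<in> carrier_mat n n"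
    and n: "0 < n" and e: "H *\<^sub>v col W 0 = e \<cdot>\<^sub>v col W 0"
  shows "col (mat_adjoint W * H * W) 0 = e \<cdot>\<^sub>v unit_vec n 0"
proof -
  have W': "mat_adjoint W \<in> carrier_mat n n"
    using W by simp
  have W0: "col W 0 \<in> carrier_vec n"
    using W(1) by (intro carrier_vecI) simp
  have "col (mat_adjoint W * H * W) 0 = mat_adjoint W *\<^sub>v (H *\<^sub>v col W 0)"
    using n by (simp add: col_mult2[OF mult_carrier_mat[OF W' H] W(1)] assoc_mult_mat_vec[OF W' H W0])
  also have "\<dots> = e \<cdot>\<^sub>v col (mat_adjoint W * W) 0"
    using n by (simp add: e mult_mat_vec[OF W' W0] col_mult2[OF W' W(1)])
  finally show ?thesis
    using W(2) n by simp
qed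

lemma hermitian_mat_first_col_block:
  assumes H: "H \<in> carrier_mat (Suc k) (Suc k)" "hermitian_mat H"
    and col: "col H 0 = e \<cdot>\<^sub>v unit_vec (Suc k) 0"
  obtains A where "A \<in> carrier_mat k k" "hermitian_mat A"
    "H = four_block_mat (mat 1 1 (\<lambda>_. e)) (0\<^sub>m 1 k) (0\<^sub>m k 1) A"
proof -
  have col0: "H $$ (i, 0) = (if i = 0 then e else 0)" if "i < Suc k" for i
    using H(1) col that index_col[of i H 0, symmetric] by simp
  have row0: "H $$ (0, j) = 0" if "0 < j" "j < Suc k" for j
    using hermitian_matD[OF H(2,1) _ that(2), of 0] col0[OF that(2)] that by simp
  define A where "A = mat k k (\<lambda>(i, j). H $$ (Suc i, Suc j))"
  have A: "A \<in> carrier_mat k k" "hermitian_mat A"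
    by (auto simp: A_def hermitian_mat_def intro!: hermitian_matD[OF H(2,1)])
  have "H = four_block_mat (mat 1 1 (\<lambda>_. e)) (0\<^sub>m 1 k) (0\<^sub>m k 1) A"
  proof (rule eq_matI)
    fix i j
    assume "i < dim_row (four_block_mat (mat 1 1 (\<lambda>_. e)) (0\<^sub>m 1 k) (0\<^sub>m k 1) A)"
      and "j < dim_col (four_block_mat (mat 1 1 (\<lambda>_. e)) (0\<^sub>m 1 k) (0\<^sub>m k 1) A)"
    then have "i < Suc k" "j < Suc k"
      using A by auto
    then show "H $$ (i, j) = four_block_mat (mat 1 1 (\<lambda>_. e)) (0\<^sub>m 1 k) (0\<^sub>m k 1) A $$ (i, j)"
      using A col0 row0 by (cases i; cases j) (auto simp: A_def)
  qed (use H A in auto)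
  with A show ?thesis
    using that by blast
qed

lemma hermitian_mat_deflation:
  assumes H: "H \<in> carrier_mat (Suc k) (Suc k)" "hermitian_mat H"
  obtains W a A where "W \<in> carrier_mat (Suc k) (Suc k)" "mat_adjoint W * W = 1\<^sub>m (Suc k)"
    "A \<in> carrier_mat k k" "hermitian_mat A"
    "mat_adjoint W * H * W = four_block_mat (mat 1 1 (\<lambda>_. a)) (0\<^sub>m 1 k) (0\<^sub>m k 1) A"
proof -
  obtain e where "eigenvalue H e"
    using spectrum_non_empty[OF H(1)] by (auto simp: spectrum_def)
  then obtain v where v: "v \<in> carrier_vec (Suc k)" "v \<noteq> 0\<^sub>v (Suc k)" "H *\<^sub>v v = e \<cdot>\<^sub>v v"
    using find_eigenvector[OF H(1)] H(1) unfolding eigenvector_def by auto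
  obtain W c where W: "W \<in> carrier_mat (Suc k) (Suc k)" "mat_adjoint W * W = 1\<^sub>m (Suc k)"
    and W0: "col W 0 = c \<cdot>\<^sub>v v"
    using unitary_mat_with_first_column[OF v(1,2)] by blast
  have "H *\<^sub>v col W 0 = e \<cdot>\<^sub>v col W 0"
    using H(1) v by (simp add: W0 mult_mat_vec smult_smult_assoc mult.commute)
  then have "col (mat_adjoint W * H * W) 0 = e \<cdot>\<^sub>v unit_vec (Suc k) 0"
    using col_congruence_eigenvector[OF W H(1)] by simp
  moreover have "mat_adjoint W * H * W \<in> carrier_mat (Suc k) (Suc k)"
    using W H by (simp add: mult_carrier_mat[of _ "Suc k" "Suc k"])
  ultimately obtain A where "A \<in> carrier_mat k k" "hermitian_mat A"
    "mat_adjoint W * H * W = four_block_mat (mat 1 1 (\<lambda>_. e)) (0\<^sub>m 1 k) (0\<^sub>m k 1) A"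
    using hermitian_mat_first_col_block hermitian_mat_congruence[OF H W(1)] by blast
  then show ?thesis
    using that W by blast
qed

theorem hermitian_mat_unitary_diagonalization:
  assumes "H \<in> carrier_mat n n" "hermitian_mat H"
  shows "\<exists>U \<in> carrier_mat n n. mat_adjoint U * U = 1\<^sub>m n \<and> diagonal_mat (mat_adjoint U * H * U)"
  using assms
proof (induction n arbitrary: H)
  case 0
  then show ?case
    by (intro bexI[of _ "1\<^sub>m 0"]) (auto simp: diagonal_mat_def)
next
  case (Suc k)
  obtain W a A where W: "W \<in> carrier_mat (Suc k) (Suc k)" "mat_adjoint W * W = 1\<^sub>m (Suc k)"
    and A: "A \<in> carrier_mat k k" "hermitian_mat A"
    and WHW: "mat_adjoint W * H * W = four_block_mat (mat 1 1 (\<lambda>_. a)) (0\<^sub>m 1 k) (0\<^sub>m k 1) A"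
    using hermitian_mat_deflation[OF Suc.prems] by blast
  obtain U where U: "U \<in> carrier_mat k k" "mat_adjoint U * U = 1\<^sub>m k"
    and diag: "diagonal_mat (mat_adjoint U * A * U)"
    using Suc.IH[OF A] by blast
  define V where "V = four_block_mat (1\<^sub>m 1) (0\<^sub>m 1 k) (0\<^sub>m k 1) U"
  have V: "V \<in> carrier_mat (Suc k) (Suc k)"
    using U(1) unfolding carrier_mat_def by (simp add: V_def)
  have "mat_adjoint (W * V) * 1\<^sub>m (Suc k) * (W * V) = mat_adjoint V * (mat_adjoint W * 1\<^sub>m (Suc k) * W) * V"
    by (rule mat_adjoint_mult_congruence[OF W(1) V one_carrier_mat])
  also have "\<dots> = 1\<^sub>m (Suc k)"
    using W U V by (simp add: V_def mat_adjoint_block_diag mult_block_diag)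
  finally have unitary: "mat_adjoint (W * V) * (W * V) = 1\<^sub>m (Suc k)"
    using W V by simp
  have "mat_adjoint (W * V) * H * (W * V) = mat_adjoint V * (mat_adjoint W * H * W) * V"
    by (rule mat_adjoint_mult_congruence[OF W(1) V Suc.prems(1)])
  also have "\<dots> = four_block_mat (mat 1 1 (\<lambda>_. a)) (0\<^sub>m 1 k) (0\<^sub>m k 1) (mat_adjoint U * A * U)"
    unfolding WHW V_def using U A mult_carrier_mat[OF mat_adjoint_carrier[OF U(1)] A(1)]
    by (simp add: mat_adjoint_block_diag mult_block_diag)
  finally have "diagonal_mat (mat_adjoint (W * V) * H * (W * V))"
    using U A diag by (simp add: diagonal_mat_def)
  with unitary show ?case
    using W V by (intro bexI[of _ "W * V"]) auto
qed

section \<open>Selection matrices\<close>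

definition selection_mat :: "nat \<Rightarrow> nat \<Rightarrow> (nat \<Rightarrow> nat) \<Rightarrow> complex mat" where
  "selection_mat d a f = mat d a (\<lambda>(k, r). if k = f r then 1 else 0)"

lemma selection_mat_dim [simp]:
  "dim_row (selection_mat d a f) = d" "dim_col (selection_mat d a f) = a"
  by (simp_all add: selection_mat_def)

lemma selection_mat_carrier [simp]: "selection_mat d a f \<in> carrier_mat d a"
  by (simp add: carrier_matI)

lemma col_selection_mat: "r < a \<Longrightarrow> col (selection_mat d a f) r = unit_vec d (f r)"
  by (intro eq_vecI) (auto simp: selection_mat_def unit_vec_def)

lemma index_selection_mat_congruence:
  assumes M: "M \<in> carrier_mat d d" and rc: "r < a" "c < a" "f r < d" "f c < d"
  shows "(mat_adjoint (selection_mat d a f) * M * selection_mat d a f) $$ (r, c) = M $$ (f r, f c)"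
proof -
  let ?E = "selection_mat d a f"
  have EM: "mat_adjoint ?E * M \<in> carrier_mat a d"
    using mult_carrier_mat[OF mat_adjoint_carrier[OF selection_mat_carrier] M] .
  have "(mat_adjoint ?E * M * ?E) $$ (r, c) = (mat_adjoint ?E * M) $$ (r, f c)"
    using EM M rc by (simp add: col_selection_mat scalar_prod_right_unit)
  also have "\<dots> = unit_vec d (f r) \<bullet> col M (f c)"
    using M rc by (simp add: row_mat_adjoint col_selection_mat)
  also have "\<dots> = M $$ (f r, f c)"
    using M rc by (simp add: scalar_prod_left_unit)
  finally show ?thesis .
qed

lemma selection_mat_isometry:
  assumes "inj_on f {..<a}" "f ` {..<a} \<subseteq> {..<d}"
  shows "mat_adjoint (selection_mat d a f) * selection_mat d a f = 1\<^sub>m a"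
proof (rule eq_matI)
  fix r c
  assume "r < dim_row (1\<^sub>m a :: complex mat)" "c < dim_col (1\<^sub>m a :: complex mat)"
  then have rc: "r < a" "c < a" "f r < d" "f c < d"
    using assms(2) by auto
  have "(mat_adjoint (selection_mat d a f) * selection_mat d a f) $$ (r, c) =
      (mat_adjoint (selection_mat d a f) * 1\<^sub>m d * selection_mat d a f) $$ (r, c)"
    by (simp add: right_mult_one_mat[of _ a d])
  also have "\<dots> = 1\<^sub>m d $$ (f r, f c)"
    by (rule index_selection_mat_congruence[OF one_carrier_mat rc])
  also have "\<dots> = 1\<^sub>m a $$ (r, c)"
    using rc assms(1) by (simp add: inj_on_eq_iff)
  finally show "(mat_adjoint (selection_mat d a f) * selection_mat d a f) $$ (r, c) = 1\<^sub>m a $$ (r, c)" .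
qed auto

lemma selection_mat_orthogonal:
  assumes "f ` {..<a} \<inter> g ` {..<b} = {}"
  shows "mat_adjoint (selection_mat d a f) * selection_mat d b g = 0\<^sub>m a b"
proof (rule eq_matI)
  fix r c
  assume "r < dim_row (0\<^sub>m a b :: complex mat)" "c < dim_col (0\<^sub>m a b :: complex mat)"
  then have "r < a" "c < b" "f r \<noteq> g c"
    using assms by auto
  then show "(mat_adjoint (selection_mat d a f) * selection_mat d b g) $$ (r, c) = 0\<^sub>m a b $$ (r, c)"
    by (simp add: row_mat_adjoint col_selection_mat unit_vec_def scalar_prod_def)
qed auto

lemma mat_trace_selection_congruence:
  assumes f: "bij_betw f {..<a} K" and K: "K \<subseteq> {..<d}"
    and A: "A \<in> carrier_mat d d" and B: "B \<in> carrier_mat d d"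
    and supp: "\<And>k l. k < d \<Longrightarrow> l < d \<Longrightarrow> k \<notin> K \<or> l \<notin> K \<Longrightarrow> A $$ (k, l) = 0"
  shows "mat_trace ((mat_adjoint (selection_mat d a f) * A * selection_mat d a f) *
    (mat_adjoint (selection_mat d a f) * B * selection_mat d a f)) = mat_trace (A * B)"
proof -
  let ?E = "selection_mat d a f"
  have fd: "f r < d" if "r < a" for r
    using bij_betw_apply[OF f] K that by auto
  have C: "mat_adjoint ?E * M * ?E \<in> carrier_mat a a" if "M \<in> carrier_mat d d" for M
    using that by (simp add: mult_carrier_mat[of _ a d _ d] mult_carrier_mat[of _ a d _ a])
  have "mat_trace ((mat_adjoint ?E * A * ?E) * (mat_adjoint ?E * B * ?E)) =
      (\<Sum>r<a. \<Sum>c<a. A $$ (f r, f c) * B $$ (f c, f r))"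
    unfolding mat_trace_mult[OF C[OF A] C[OF B]] using A B fd
    by (simp del: index_mult_mat add: index_selection_mat_congruence)
  also have "\<dots> = (\<Sum>k\<in>K. \<Sum>c<a. A $$ (k, f c) * B $$ (f c, k))"
    by (rule sum.reindex_bij_betw[OF f, where g = "\<lambda>k. \<Sum>c<a. A $$ (k, f c) * B $$ (f c, k)"])
  also have "\<dots> = (\<Sum>k\<in>K. \<Sum>l\<in>K. A $$ (k, l) * B $$ (l, k))"
    by (rule sum.cong[OF refl], rule sum.reindex_bij_betw[OF f])
  also have "\<dots> = (\<Sum>k\<in>K. \<Sum>l<d. A $$ (k, l) * B $$ (l, k))"
    using K supp by (intro sum.cong refl sum.mono_neutral_left) auto
  also have "\<dots> = (\<Sum>k<d. \<Sum>l<d. A $$ (k, l) * B $$ (l, k))"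
    using K supp by (intro sum.mono_neutral_left) (auto intro!: sum.neutral)
  also have "\<dots> = mat_trace (A * B)"
    using A B by (simp add: mat_trace_mult)
  finally show ?thesis .
qed

section \<open>Trace-orthogonal families of psd matrices\<close>

definition psd_family :: "nat \<Rightarrow> nat \<Rightarrow> (nat \<Rightarrow> complex mat) \<Rightarrow> bool" where
  "psd_family d n P \<longleftrightarrow> (\<forall>i<n. P i \<in> carrier_mat d d \<and> psd_mat (P i))"

definition mat_sum :: "nat \<Rightarrow> nat \<Rightarrow> (nat \<Rightarrow> complex mat) \<Rightarrow> complex mat" where
  "mat_sum d n A = mat d d (\<lambda>(p, q). \<Sum>i<n. A i $$ (p, q))"

lemma mat_sum_carrier [simp]: "mat_sum d n A \<in> carrier_mat d d"
  by (simp add: mat_sum_def)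

lemma hermitian_mat_sum:
  assumes "\<And>i. i < n \<Longrightarrow> A i \<in> carrier_mat d d \<and> hermitian_mat (A i)"
  shows "hermitian_mat (mat_sum d n A)"
proof -
  have herm: "A i $$ (p, q) = cnj (A i $$ (q, p))" if "i \<in> {..<n}" "p < d" "q < d" for i p q
    using assms that hermitian_matD by blast
  have "(\<Sum>i<n. A i $$ (p, q)) = cnj (\<Sum>i<n. A i $$ (q, p))" if "p < d" "q < d" for p q
    unfolding cnj_sum using that by (intro sum.cong refl herm)
  then show ?thesis
    unfolding hermitian_mat_def mat_sum_def by simp
qed

lemma mat_trace_mat_sum_mult:
  assumes A: "\<And>i. i < n \<Longrightarrow> A i \<in> carrier_mat d d" and B: "B \<in> carrier_mat d d"
  shows "mat_trace (mat_sum d n A * B) = (\<Sum>i<n. mat_trace (A i * B))"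
proof -
  have "mat_trace (mat_sum d n A * B) = (\<Sum>p<d. \<Sum>q<d. mat_sum d n A $$ (p, q) * B $$ (q, p))"
    by (rule mat_trace_mult[OF mat_sum_carrier B])
  also have "\<dots> = (\<Sum>p<d. \<Sum>q<d. \<Sum>i<n. A i $$ (p, q) * B $$ (q, p))"
    by (simp add: mat_sum_def sum_distrib_right)
  also have "\<dots> = (\<Sum>i<n. \<Sum>p<d. \<Sum>q<d. A i $$ (p, q) * B $$ (q, p))"
    by (simp only: sum.swap[of _ "{..<d}" "{..<n}"])
  also have "\<dots> = (\<Sum>i<n. mat_trace (A i * B))"
    using A B by (intro sum.cong refl) (simp add: mat_trace_mult[OF A B])
  finally show ?thesis .
qed

lemma mat_sum_congruence:
  assumes U: "U \<in> carrier_mat d k" and A: "\<And>i. i < n \<Longrightarrow> A i \<in> carrier_mat d d"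
  shows "mat_adjoint U * mat_sum d n A * U = mat_sum k n (\<lambda>i. mat_adjoint U * A i * U)"
proof (rule eq_matI)
  fix a b
  assume "a < dim_row (mat_sum k n (\<lambda>i. mat_adjoint U * A i * U))"
    "b < dim_col (mat_sum k n (\<lambda>i. mat_adjoint U * A i * U))"
  then have ab: "a < k" "b < k"
    by (auto simp: mat_sum_def)
  have "(mat_adjoint U * mat_sum d n A * U) $$ (a, b) =
      (\<Sum>l<d. \<Sum>p<d. cnj (U $$ (p, a)) * mat_sum d n A $$ (p, l) * U $$ (l, b))"
    by (rule index_congruence[OF U mat_sum_carrier ab])
  also have "\<dots> = (\<Sum>l<d. \<Sum>p<d. \<Sum>i<n. cnj (U $$ (p, a)) * A i $$ (p, l) * U $$ (l, b))"
    by (simp add: mat_sum_def sum_distrib_left sum_distrib_right)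
  also have "\<dots> = (\<Sum>i<n. \<Sum>l<d. \<Sum>p<d. cnj (U $$ (p, a)) * A i $$ (p, l) * U $$ (l, b))"
    by (simp only: sum.swap[of _ "{..<d}" "{..<n}"])
  also have "\<dots> = mat_sum k n (\<lambda>i. mat_adjoint U * A i * U) $$ (a, b)"
    using ab by (simp del: index_mult_mat add: mat_sum_def index_congruence[OF U A ab])
  finally show "(mat_adjoint U * mat_sum d n A * U) $$ (a, b) =
      mat_sum k n (\<lambda>i. mat_adjoint U * A i * U) $$ (a, b)" .
qed (use U in \<open>auto simp: mat_sum_def\<close>)

lemma psd_family_compress:
  assumes A: "psd_family d n A" and K: "K \<subseteq> {..<d}"
    and zero: "\<And>i k. i < n \<Longrightarrow> k < d \<Longrightarrow> k \<notin> K \<Longrightarrow> A i $$ (k, k) = 0"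
  obtains P where "psd_family (card K) n P"
    "\<And>i j. i < n \<Longrightarrow> j < n \<Longrightarrow> mat_trace (P i * P j) = mat_trace (A i * A j)"
proof -
  obtain f where f: "bij_betw f {..<card K} K"
    using ex_bij_betw_nat_finite[OF finite_subset[OF K]] by (auto simp: atLeast0LessThan)
  define E where "E = selection_mat d (card K) f"
  have E: "E \<in> carrier_mat d (card K)"
    by (simp add: E_def)
  have Ai: "A i \<in> carrier_mat d d" "psd_mat (A i)" if "i < n" for i
    using A that by (auto simp: psd_family_def)
  have "psd_family (card K) n (\<lambda>i. mat_adjoint E * A i * E)"
    unfolding psd_family_def
    using mult_carrier_mat[OF mult_carrier_mat[OF mat_adjoint_carrier[OF E] Ai(1)] E]
      psd_mat_congruence[OF Ai E] by blast
  moreover have "mat_trace ((mat_adjoint E * A i * E) * (mat_adjoint E * A j * E)) =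
      mat_trace (A i * A j)" if "i < n" "j < n" for i j
    unfolding E_def
  proof (rule mat_trace_selection_congruence[OF f K Ai(1)[OF that(1)] Ai(1)[OF that(2)]])
    show "A i $$ (k, l) = 0" if "k < d" "l < d" "k \<notin> K \<or> l \<notin> K" for k l
      using that psd_mat_zero_diag[OF Ai[OF \<open>i < n\<close>]] zero[OF \<open>i < n\<close>] by blast
  qed
  ultimately show ?thesis
    using that by blast
qed

lemma psd_families_orthogonal_split_diagonal:
  assumes A: "psd_family d n A" and B: "psd_family d m B"
    and orth: "\<And>i j. i < n \<Longrightarrow> j < m \<Longrightarrow> mat_trace (A i * B j) = 0"
    and diag: "diagonal_mat (mat_sum d n A)"
  obtains a b P Q where "a + b = d" "psd_family a n P" "psd_family b m Q"
    "\<And>i j. i < n \<Longrightarrow> j < n \<Longrightarrow> mat_trace (P i * P j) = mat_trace (A i * A j)"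
    "\<And>i j. i < m \<Longrightarrow> j < m \<Longrightarrow> mat_trace (Q i * Q j) = mat_trace (B i * B j)"
proof -
  define S where "S = mat_sum d n A"
  define K where "K = {k. k < d \<and> S $$ (k, k) \<noteq> 0}"
  have Ai: "A i \<in> carrier_mat d d" "psd_mat (A i)" if "i < n" for i
    using A that by (auto simp: psd_family_def)
  have Bj: "B j \<in> carrier_mat d d" "psd_mat (B j)" if "j < m" for j
    using B that by (auto simp: psd_family_def)
  have S_diag: "S $$ (k, k) = (\<Sum>i<n. A i $$ (k, k))" if "k < d" for k
    using that by (simp add: S_def mat_sum_def)
  have A_nonneg: "0 \<le> A i $$ (k, k)" if "i < n" "k < d" for i k
    using psd_mat_diag_nonneg[OF Ai[OF that(1)] that(2)] .
  have A_zero: "A i $$ (k, k) = 0" if "i < n" "k < d" "k \<notin> K" for i k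
    using that S_diag[OF that(2)] A_nonneg sum_nonneg_eq_0_iff[of "{..<n}" "\<lambda>i. A i $$ (k, k)"]
    by (auto simp: K_def)
  have B_zero: "B j $$ (k, k) = 0" if "j < m" "k < d" "k \<notin> {..<d} - K" for j k
  proof (rule psd_mat_diag_zero_trace_orthogonal[OF mat_sum_carrier diag _ Bj[OF that(1)]])
    show "0 \<le> mat_sum d n A $$ (l, l)" if "l < d" for l
      unfolding S_def[symmetric] S_diag[OF that] using that by (intro sum_nonneg A_nonneg) auto
    show "mat_trace (mat_sum d n A * B j) = 0"
      using Ai(1) Bj(1)[OF that(1)] orth[OF _ that(1)] by (simp add: mat_trace_mat_sum_mult)
    show "k < d" "mat_sum d n A $$ (k, k) \<noteq> 0"
      using that by (auto simp: K_def S_def)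
  qed
  have K: "K \<subseteq> {..<d}" "{..<d} - K \<subseteq> {..<d}"
    by (auto simp: K_def)
  obtain P where P: "psd_family (card K) n P"
    "\<And>i j. i < n \<Longrightarrow> j < n \<Longrightarrow> mat_trace (P i * P j) = mat_trace (A i * A j)"
    using psd_family_compress[OF A K(1) A_zero] by blast
  obtain Q where Q: "psd_family (card ({..<d} - K)) m Q"
    "\<And>i j. i < m \<Longrightarrow> j < m \<Longrightarrow> mat_trace (Q i * Q j) = mat_trace (B i * B j)"
    using psd_family_compress[OF B K(2) B_zero] by blast
  have "card K + card ({..<d} - K) = d"
    using K(1) card_mono[OF finite_lessThan K(1)] by (simp add: card_Diff_subset finite_subset)
  then show ?thesis
    using that P Q by blast
qed

lemma psd_families_orthogonal_split:
  assumes A: "psd_family d n A" and B: "psd_family d m B"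
    and orth: "\<And>i j. i < n \<Longrightarrow> j < m \<Longrightarrow> mat_trace (A i * B j) = 0"
  obtains a b P Q where "a + b = d" "psd_family a n P" "psd_family b m Q"
    "\<And>i j. i < n \<Longrightarrow> j < n \<Longrightarrow> mat_trace (P i * P j) = mat_trace (A i * A j)"
    "\<And>i j. i < m \<Longrightarrow> j < m \<Longrightarrow> mat_trace (Q i * Q j) = mat_trace (B i * B j)"
proof -
  have Ai: "A i \<in> carrier_mat d d" "psd_mat (A i)" if "i < n" for i
    using A that by (auto simp: psd_family_def)
  have Bj: "B j \<in> carrier_mat d d" "psd_mat (B j)" if "j < m" for j
    using B that by (auto simp: psd_family_def)
  obtain U where U: "U \<in> carrier_mat d d" "mat_adjoint U * U = 1\<^sub>m d"
    and diag: "diagonal_mat (mat_adjoint U * mat_sum d n A * U)"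
    using hermitian_mat_unitary_diagonalization[OF mat_sum_carrier hermitian_mat_sum]
      Ai psd_mat_hermitian by blast
  have U': "mat_adjoint U \<in> carrier_mat d d" "mat_adjoint (mat_adjoint U) * mat_adjoint U = 1\<^sub>m d"
    using U mat_mult_left_right_inverse[OF mat_adjoint_carrier[OF U(1)] U(1)] by auto
  have trace: "mat_trace ((mat_adjoint U * M * U) * (mat_adjoint U * N * U)) = mat_trace (M * N)"
    if "M \<in> carrier_mat d d" "N \<in> carrier_mat d d" for M N
    using mat_trace_isometry_conj[OF U'(1,2) that] by simp
  have psd: "psd_family d k (\<lambda>i. mat_adjoint U * C i * U)" if "psd_family d k C" for C k
    using that psd_mat_congruence[OF _ _ U(1)] mult_carrier_mat[OF mult_carrier_mat[OF U'(1)] U(1)]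
    unfolding psd_family_def by blast
  have "diagonal_mat (mat_sum d n (\<lambda>i. mat_adjoint U * A i * U))"
    using diag mat_sum_congruence[OF U(1) Ai(1)] by simp
  moreover have "mat_trace ((mat_adjoint U * A i * U) * (mat_adjoint U * B j * U)) = 0"
    if "i < n" "j < m" for i j
    using trace[OF Ai(1) Bj(1)] orth that by simp
  ultimately obtain a b P Q where "a + b = d" "psd_family a n P" "psd_family b m Q"
    and "\<And>i j. i < n \<Longrightarrow> j < n \<Longrightarrow>
      mat_trace (P i * P j) = mat_trace ((mat_adjoint U * A i * U) * (mat_adjoint U * A j * U))"
    and "\<And>i j. i < m \<Longrightarrow> j < m \<Longrightarrow>
      mat_trace (Q i * Q j) = mat_trace ((mat_adjoint U * B i * U) * (mat_adjoint U * B j * U))"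
    using psd_families_orthogonal_split_diagonal[OF psd[OF A] psd[OF B]] by blast
  then show ?thesis
    using that trace Ai(1) Bj(1) by simp
qed

lemma psd_families_direct_sum:
  assumes P: "psd_family a n P" and Q: "psd_family b m Q"
  obtains R where "psd_family (a + b) (n + m) R"
    "\<And>i j. i < n \<Longrightarrow> j < n \<Longrightarrow> mat_trace (R i * R j) = mat_trace (P i * P j)"
    "\<And>i j. i < m \<Longrightarrow> j < m \<Longrightarrow> mat_trace (R (n + i) * R (n + j)) = mat_trace (Q i * Q j)"
    "\<And>i j. i < n \<Longrightarrow> j < m \<Longrightarrow> mat_trace (R i * R (n + j)) = 0"
    "\<And>i j. i < n \<Longrightarrow> j < m \<Longrightarrow> mat_trace (R (n + j) * R i) = 0"
proof -
  define E where "E = selection_mat (a + b) a id"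
  define F where "F = selection_mat (a + b) b (\<lambda>r. a + r)"
  have E: "E \<in> carrier_mat (a + b) a" "mat_adjoint E * E = 1\<^sub>m a"
    by (auto simp: E_def intro!: selection_mat_isometry)
  have F: "F \<in> carrier_mat (a + b) b" "mat_adjoint F * F = 1\<^sub>m b"
    by (auto simp: F_def intro!: selection_mat_isometry)
  have EF: "mat_adjoint E * F = 0\<^sub>m a b" and FE: "mat_adjoint F * E = 0\<^sub>m b a"
    by (auto simp: E_def F_def intro!: selection_mat_orthogonal)
  define R where "R i = (if i < n then E * P i * mat_adjoint E else F * Q (i - n) * mat_adjoint F)" for i
  have Pi: "P i \<in> carrier_mat a a" "psd_mat (P i)" if "i < n" for i
    using P that by (auto simp: psd_family_def)
  have Qj: "Q j \<in> carrier_mat b b" "psd_mat (Q j)" if "j < m" for j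
    using Q that by (auto simp: psd_family_def)
  have "psd_family (a + b) (n + m) R"
    unfolding psd_family_def
  proof (intro allI impI)
    fix i
    assume "i < n + m"
    then show "R i \<in> carrier_mat (a + b) (a + b) \<and> psd_mat (R i)"
      using psd_mat_conj[OF E(1) Pi] psd_mat_conj[OF F(1) Qj] by (cases "i < n") (simp_all add: R_def)
  qed
  moreover have "mat_trace (R i * R j) = mat_trace (P i * P j)" if "i < n" "j < n" for i j
    using mat_trace_isometry_conj[OF E Pi(1) Pi(1)] that by (simp add: R_def)
  moreover have "mat_trace (R (n + i) * R (n + j)) = mat_trace (Q i * Q j)" if "i < m" "j < m" for i j
    using mat_trace_isometry_conj[OF F Qj(1) Qj(1)] that by (simp add: R_def)
  moreover have "mat_trace (R i * R (n + j)) = 0" "mat_trace (R (n + j) * R i) = 0"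
    if "i < n" "j < m" for i j
    using congruence_orthogonal_mult[OF E(1) F(1) EF Pi(1) Qj(1)]
      congruence_orthogonal_mult[OF F(1) E(1) FE Qj(1) Pi(1)] that
    by (simp_all add: R_def mat_trace_def)
  ultimately show ?thesis
    using that by blast
qed

section \<open>Factorizations of block-diagonal matrices\<close>

lemma cpsd_factorizable_iff:
  "cpsd_factorizable d X \<longleftrightarrow> (\<exists>P. psd_family d (dim_row X) P \<and>
    (\<forall>i < dim_row X. \<forall>j < dim_row X. complex_of_real (X $$ (i, j)) = mat_trace (P i * P j)))"
  by (simp add: cpsd_factorizable_def psd_family_def)

lemma cpsd_factorizable_zero_dim:
  assumes X: "X \<in> carrier_mat n n" and f: "cpsd_factorizable 0 X"
  shows "X = 0\<^sub>m n n"
proof (rule eq_matI)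
  have dim: "dim_row X = n"
    using X by simp
  obtain P where P: "psd_family 0 n P"
    and XP: "\<forall>i < n. \<forall>j < n. complex_of_real (X $$ (i, j)) = mat_trace (P i * P j)"
    using f unfolding cpsd_factorizable_iff dim by blast
  fix i j
  assume "i < dim_row (0\<^sub>m n n :: real mat)" "j < dim_col (0\<^sub>m n n :: real mat)"
  then have ij: "i < n" "j < n"
    by simp_all
  then have "P i \<in> carrier_mat 0 0"
    using P by (simp add: psd_family_def)
  then have "dim_row (P i) = 0"
    by (rule carrier_matD)
  then show "X $$ (i, j) = 0\<^sub>m n n $$ (i, j)"
    using XP[rule_format, OF ij] ij by (simp add: mat_trace_def)
qed (use X in simp_all)

lemma cpsd_factorizable_block_diag:
  assumes X: "X \<in> carrier_mat n n" and Y: "Y \<in> carrier_mat m m"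
    and "cpsd_factorizable a X" "cpsd_factorizable b Y"
  shows "cpsd_factorizable (a + b) (four_block_mat X (0\<^sub>m n m) (0\<^sub>m m n) Y)"
proof -
  obtain P where P: "psd_family a n P"
    and XP: "\<forall>i < n. \<forall>j < n. complex_of_real (X $$ (i, j)) = mat_trace (P i * P j)"
    using assms X unfolding cpsd_factorizable_iff by auto
  obtain Q where Q: "psd_family b m Q"
    and YQ: "\<forall>i < m. \<forall>j < m. complex_of_real (Y $$ (i, j)) = mat_trace (Q i * Q j)"
    using assms Y unfolding cpsd_factorizable_iff by auto
  obtain R where R: "psd_family (a + b) (n + m) R"
    and RP: "\<And>i j. i < n \<Longrightarrow> j < n \<Longrightarrow> mat_trace (R i * R j) = mat_trace (P i * P j)"
    and RQ: "\<And>i j. i < m \<Longrightarrow> j < m \<Longrightarrow> mat_trace (R (n + i) * R (n + j)) = mat_trace (Q i * Q j)"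
    and RPQ: "\<And>i j. i < n \<Longrightarrow> j < m \<Longrightarrow> mat_trace (R i * R (n + j)) = 0"
    and RQP: "\<And>i j. i < n \<Longrightarrow> j < m \<Longrightarrow> mat_trace (R (n + j) * R i) = 0"
    using psd_families_direct_sum[OF P Q] by blast
  have "complex_of_real (four_block_mat X (0\<^sub>m n m) (0\<^sub>m m n) Y $$ (i, j)) =
      mat_trace (R i * R j)" if "i < n + m" "j < n + m" for i j
    using X Y that XP YQ RP RQ[of "i - n" "j - n"] RPQ[of i "j - n"] RQP[of j "i - n"]
    by (cases "i < n"; cases "j < n") auto
  moreover have "dim_row (four_block_mat X (0\<^sub>m n m) (0\<^sub>m m n) Y) = n + m"
    using X Y by simp
  ultimately show ?thesis
    unfolding cpsd_factorizable_iff using R by auto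
qed

lemma cpsd_factorizable_block_diag_split:
  assumes X: "X \<in> carrier_mat n n" and Y: "Y \<in> carrier_mat m m"
    and f: "cpsd_factorizable d (four_block_mat X (0\<^sub>m n m) (0\<^sub>m m n) Y)"
  obtains a b where "a + b = d" "cpsd_factorizable a X" "cpsd_factorizable b Y"
proof -
  let ?Z = "four_block_mat X (0\<^sub>m n m) (0\<^sub>m m n) Y"
  have dim: "dim_row ?Z = n + m" "dim_row X = n" "dim_row Y = m"
    using X Y by simp_all
  obtain R where R: "psd_family d (n + m) R"
    and ZR: "\<forall>i < n + m. \<forall>j < n + m. complex_of_real (?Z $$ (i, j)) = mat_trace (R i * R j)"
    using f unfolding cpsd_factorizable_iff dim by blast
  have A: "psd_family d n R" and B: "psd_family d m (\<lambda>j. R (n + j))"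
    using R by (auto simp: psd_family_def)
  have XR: "complex_of_real (X $$ (i, j)) = mat_trace (R i * R j)" if "i < n" "j < n" for i j
    using ZR[rule_format, of i j] X Y that by simp
  have YR: "complex_of_real (Y $$ (i, j)) = mat_trace (R (n + i) * R (n + j))"
    if "i < m" "j < m" for i j
    using ZR[rule_format, of "n + i" "n + j"] X Y that by simp
  have "mat_trace (R i * R (n + j)) = 0" if "i < n" "j < m" for i j
    using ZR[rule_format, of i "n + j"] X Y that by simp
  then obtain a b P Q where ab: "a + b = d" and P: "psd_family a n P" and Q: "psd_family b m Q"
    and PR: "\<And>i j. i < n \<Longrightarrow> j < n \<Longrightarrow> mat_trace (P i * P j) = mat_trace (R i * R j)"
    and QR: "\<And>i j. i < m \<Longrightarrow> j < m \<Longrightarrow> mat_trace (Q i * Q j) = mat_trace (R (n + i) * R (n + j))"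
    using psd_families_orthogonal_split[OF A B] by blast
  have "cpsd_factorizable a X"
    unfolding cpsd_factorizable_iff dim using P PR XR by auto
  moreover have "cpsd_factorizable b Y"
    unfolding cpsd_factorizable_iff dim using Q QR YR by auto
  ultimately show ?thesis
    using that ab by blast
qed

lemma cpsd_rank_factorizable:
  assumes "cpsd X"
  shows "1 \<le> cpsd_rank X" and "cpsd_factorizable (cpsd_rank X) X"
  using assms LeastI_ex[of "\<lambda>d. 1 \<le> d \<and> cpsd_factorizable d X"]
  unfolding cpsd_def cpsd_rank_def by auto

lemma cpsd_rank_le: "1 \<le> d \<Longrightarrow> cpsd_factorizable d X \<Longrightarrow> cpsd_rank X \<le> d"
  unfolding cpsd_rank_def by (rule Least_le) simp

theorem lemma3p6:
  fixes X Y :: "real mat" and n m :: nat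
  assumes "X \<in> carrier_mat n n" and "Y \<in> carrier_mat m m"
    and "cpsd X" and "cpsd Y"
    and "X \<noteq> 0\<^sub>m n n" and "Y \<noteq> 0\<^sub>m m m"
  shows "cpsd (four_block_mat X (0\<^sub>m n m) (0\<^sub>m m n) Y) \<and>
         cpsd_rank (four_block_mat X (0\<^sub>m n m) (0\<^sub>m m n) Y) = cpsd_rank X + cpsd_rank Y"
proof -
  note X = assms(1) and Y = assms(2)
  let ?Z = "four_block_mat X (0\<^sub>m n m) (0\<^sub>m m n) Y"
  have rank: "1 \<le> cpsd_rank X + cpsd_rank Y"
    using cpsd_rank_factorizable(1)[OF assms(3)] by simp
  have "cpsd_factorizable (cpsd_rank X + cpsd_rank Y) ?Z"
    using cpsd_factorizable_block_diag[OF X Y] cpsd_rank_factorizable assms(3,4) by blast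
  then have Z: "cpsd ?Z" and upper: "cpsd_rank ?Z \<le> cpsd_rank X + cpsd_rank Y"
    using X Y rank cpsd_rank_le unfolding cpsd_def by auto
  obtain a b where ab: "a + b = cpsd_rank ?Z" and "cpsd_factorizable a X" "cpsd_factorizable b Y"
    using cpsd_factorizable_block_diag_split[OF X Y cpsd_rank_factorizable(2)[OF Z]] by blast
  moreover have "a \<noteq> 0" and "b \<noteq> 0"
    using calculation cpsd_factorizable_zero_dim[OF X] cpsd_factorizable_zero_dim[OF Y] assms(5,6)
    by auto
  ultimately have "cpsd_rank X + cpsd_rank Y \<le> cpsd_rank ?Z"
    using cpsd_rank_le[of a X] cpsd_rank_le[of b Y] by simp
  with Z upper show ?thesis
    by simp
qed

end
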